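(* Let $M=G/K$ be as in the standing setup, of rank $r$, and let $1\le s\le r$. Let $\mu=\sum_{j=1}^{s}k_j\xi_j$ with $k_j\in\mathbb Z_{\ge0}$ and $k_s>0$. Then \[ \mathbf c(\mu+\rho)\le\mathbf c(\xi_s+\rho). \]
   Context: Standing setup. $G$ is a connected compact semisimple Lie group, $\theta$ an involutive automorphism, $K$ a closed subgroup with $(G^\theta)_0\subseteq K\subseteq G^\theta$, $M=G/K$ simply connected. $\mathfrak g=\mathfrak k\oplus\mathfrak s$ is the eigenspace decomposition of $\theta$, $\mathfrak a\subseteq\mathfrak s$ maximal abelian with $r=\dim\mathfrak a$, and a $K$-invariant inner product on $\mathfrak s$ induces a real inner product $\langle\cdot,\cdot\rangle$ on $i\mathfrak a^*$. $\Sigma\subset i\mathfrak a^*$ is the set of restricted roots, $m_\alpha$ their multiplicities ($m_\beta=0$ if $\beta\notin\Sigma$), $\Sigma^+$ a positive system, $\Sigma_0^+=\{\alpha\in\Sigma^+:2\alpha\notin\Sigma\}$ with simple roots $\alpha_1,\dots,\alpha_r$, $\rho=\tfrac12\sum_{\alpha\in\Sigma^+}m_\alpha\alpha$, and $\lambda_\alpha=\langle\lambda,\alpha\rangle/\langle\alpha,\alpha\rangle$. The class 1 fundamental weights $\xi_1,\dots,\xi_r\in i\mathfrak a^*$ are defined by $\langle\xi_i,\alpha_j\rangle/\langle\alpha_j,\alpha_j\rangle=\delta_{ij}$. The Harish-Chandra $c$-function is $\mathbf c(\lambda)={}'c(\lambda)/{}'c(\rho)$ with ${}'c(\lambda)=\prod_{\alpha\in\Sigma_0^+}\frac{2^{-2\lambda_\alpha}\Gamma(2\lambda_\alpha)}{\Gamma(\lambda_\alpha+m_{\alpha/2}/4+1/2)\Gamma(\lambda_\alpha+m_{\alpha/2}/4+m_\alpha/2)}$.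 *)

theory Defs
  imports "HOL-Analysis.Analysis"
begin

text \<open>Abstract model of the restricted root system of a compact symmetric space.
  The real inner product space i a^* is modelled by a Euclidean space 'a
  (so r = DIM('a)).\<close>

definition coroot_coeff :: "'a::real_inner \<Rightarrow> 'a \<Rightarrow> real" where
  "coroot_coeff lam a = inner lam a / inner a a"

definition root_reflect :: "'a::real_inner \<Rightarrow> 'a \<Rightarrow> 'a" where
  "root_reflect a b = b - (2 * coroot_coeff b a) *\<^sub>R a"

definition root_system_mult :: "'a::euclidean_space set \<Rightarrow> ('a \<Rightarrow> nat) \<Rightarrow> bool" where
  "root_system_mult S m \<longleftrightarrow>
     finite S \<and> 0 \<notin> S \<and> span S = UNIV \<and>
     (\<forall>a\<in>S. \<forall>b\<in>S. root_reflect a b \<in> S) \<and>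
     (\<forall>a\<in>S. \<forall>b\<in>S. 2 * coroot_coeff b a \<in> \<int>) \<and>
     (\<forall>a\<in>S. m a > 0) \<and> (\<forall>b. b \<notin> S \<longrightarrow> m b = 0) \<and>
     (\<forall>a\<in>S. \<forall>b\<in>S. m (root_reflect a b) = m b)"

definition positive_system :: "'a::euclidean_space set \<Rightarrow> 'a set \<Rightarrow> bool" where
  "positive_system S P \<longleftrightarrow>
     (\<exists>h. (\<forall>a\<in>S. inner a h \<noteq> 0) \<and> P = {a\<in>S. inner a h > 0})"

definition Sigma0_pos :: "'a::real_vector set \<Rightarrow> 'a set \<Rightarrow> 'a set" where
  "Sigma0_pos S P = {a\<in>P. (2::real) *\<^sub>R a \<notin> S}"

definition simple_roots0 :: "'a::real_vector set \<Rightarrow> 'a set \<Rightarrow> 'a set" where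
  "simple_roots0 S P = {a\<in>Sigma0_pos S P.
      \<not> (\<exists>b\<in>Sigma0_pos S P. \<exists>c\<in>Sigma0_pos S P. a = b + c)}"

definition rho_vec :: "('a::real_vector \<Rightarrow> nat) \<Rightarrow> 'a set \<Rightarrow> 'a" where
  "rho_vec m P = (1/2) *\<^sub>R (\<Sum>a\<in>P. real (m a) *\<^sub>R a)"

definition c_prime :: "'a::real_inner set \<Rightarrow> ('a \<Rightarrow> nat) \<Rightarrow> 'a set \<Rightarrow> 'a \<Rightarrow> real" where
  "c_prime S m P lam = (\<Prod>a\<in>Sigma0_pos S P.
     (let x = coroot_coeff lam a;
          mh = real (m ((1/2::real) *\<^sub>R a)) / 4
      in 2 powr (- 2 * x) * Gamma (2 * x) /
         (Gamma (x + mh + 1/2) * Gamma (x + mh + real (m a) / 2))))"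

definition c_fun :: "'a::real_inner set \<Rightarrow> ('a \<Rightarrow> nat) \<Rightarrow> 'a set \<Rightarrow> 'a \<Rightarrow> real" where
  "c_fun S m P lam = c_prime S m P lam / c_prime S m P (rho_vec m P)"

end

theory Submission
  imports Defs
begin

(*
  The c-function is a product over a in Sigma_0^+ of factors
  F(t) = 2^(-2t) Gamma(2t) / (Gamma(t + p) Gamma(t + q)) evaluated at t = lambda_a,
  with p >= 1/2 and q >= 0.  By the Legendre duplication formula
  F(t) = Gamma(t)/Gamma(t+q) * Gamma(t+1/2)/Gamma(t+p) / (2 sqrt pi), and each
  ratio Gamma(x)/Gamma(x+q) decreases for x > 0 since the digamma function is
  increasing.  So F is positive and decreasing on (0, oo), and c(lambda') <= c(lambda)
  whenever 0 < lambda_a <= lambda'_a for all a in Sigma_0^+ (lemma c_fun_antimono).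

  The root-theoretic part supplies these inequalities for lambda = xi_s + rho and
  lambda' = mu + rho: every a in Sigma_0^+ is a non-negative integer combination of
  simple roots, so (xi_j)_a >= 0 and (xi_s)_a <= mu_a; and rho_a > 0 because
  <rho, alpha_i> > 0, which follows from the simple reflection s_(alpha_i)
  permuting the positive roots other than alpha_i and alpha_i/2.
*)

section \<open>The factors of the c-function\<close>

text \<open>For fixed \<open>q \<ge> 0\<close>, \<open>\<Gamma>(x)/\<Gamma>(x+q)\<close> decreases on \<open>x > 0\<close>: its logarithmic derivative
  \<open>\<psi>(x) - \<psi>(x+q)\<close> is non-positive because the digamma function \<open>\<psi>\<close> is increasing.\<close>
lemma Gamma_ratio_antimono:
  fixes x y q :: real
  assumes "0 < x" "x \<le> y" "0 \<le> q"
  shows "Gamma y / Gamma (y + q) \<le> Gamma x / Gamma (x + q)"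
proof -
  have "ln_Gamma y - ln_Gamma (y + q) \<le> ln_Gamma x - ln_Gamma (x + q)"
  proof (rule DERIV_nonpos_imp_nonincreasing[where f = "\<lambda>t. ln_Gamma t - ln_Gamma (t + q)", OF assms(2)])
    fix t assume "x \<le> t" "t \<le> y"
    with assms have "t > 0" by linarith
    with assms show "\<exists>d. DERIV (\<lambda>t. ln_Gamma t - ln_Gamma (t + q)) t :> d \<and> d \<le> 0"
      by (intro exI[of _ "Digamma t - Digamma (t + q)"] conjI)
         (auto intro!: derivative_eq_intros Digamma_real_mono)
  qed
  then have "exp (ln_Gamma y - ln_Gamma (y + q)) \<le> exp (ln_Gamma x - ln_Gamma (x + q))"
    by simp
  with assms show ?thesis by (simp add: exp_diff Gamma_real_pos_exp)
qed

text \<open>Legendre duplication for positive reals, in the form needed to split a factor of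
  the c-function (the library states it over the complex numbers).\<close>
lemma Gamma_duplication_real:
  fixes x :: real
  assumes "x > 0"
  shows "2 powr (- 2 * x) * Gamma (2 * x) = Gamma x * Gamma (x + 1/2) / (2 * sqrt pi)"
proof -
  have nonpole: "complex_of_real x \<notin> \<int>\<^sub>\<le>\<^sub>0" "complex_of_real x + 1/2 \<notin> \<int>\<^sub>\<le>\<^sub>0"
    using assms by (auto elim!: nonpos_Ints_cases simp: complex_eq_iff)
  have "complex_of_real (Gamma x * Gamma (x + 1/2))
      = complex_of_real (exp ((1 - 2 * x) * ln 2) * sqrt pi * Gamma (2 * x))"
    using Gamma_legendre_duplication[OF nonpole]
    by (simp add: Gamma_complex_of_real[symmetric] exp_of_real[symmetric])
  then have dup: "Gamma x * Gamma (x + 1/2) = exp ((1 - 2 * x) * ln 2) * sqrt pi * Gamma (2 * x)"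
    by (simp only: of_real_eq_iff)
  have split_exponent: "(1 - 2 * x) * ln 2 = ln 2 + (- 2 * x) * ln 2" by algebra
  have "exp ((1 - 2 * x) * ln 2) = 2 * 2 powr (- 2 * x)"
    unfolding split_exponent exp_add by (simp add: powr_def)
  with dup show ?thesis by (simp add: field_simps)
qed

definition c_factor :: "real \<Rightarrow> real \<Rightarrow> real \<Rightarrow> real" where
  "c_factor p q t = 2 powr (- 2 * t) * Gamma (2 * t) / (Gamma (t + p) * Gamma (t + q))"

lemma c_factor_split:
  assumes "t > 0" "p \<ge> 1/2" "q \<ge> 0"
  shows "c_factor p q t
    = (Gamma t / Gamma (t + q)) * (Gamma (t + 1/2) / Gamma ((t + 1/2) + (p - 1/2))) / (2 * sqrt pi)"
proof -
  have shift: "(t + 1/2) + (p - 1/2) = t + p" by simp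
  have "Gamma (t + p) > 0" "Gamma (t + q) > 0" using assms by auto
  then show ?thesis
    unfolding shift c_factor_def Gamma_duplication_real[OF assms(1)] by (simp add: field_simps)
qed

lemma c_factor_pos:
  assumes "t > 0" "p \<ge> 1/2" "q \<ge> 0"
  shows "c_factor p q t > 0"
  using assms unfolding c_factor_split[OF assms] by (auto intro!: divide_pos_pos mult_pos_pos)

lemma c_factor_antimono:
  assumes "0 < x" "x \<le> y" "p \<ge> 1/2" "q \<ge> 0"
  shows "c_factor p q y \<le> c_factor p q x"
proof -
  have y: "y > 0" using assms by linarith
  have "Gamma y / Gamma (y + q) \<le> Gamma x / Gamma (x + q)"
    by (rule Gamma_ratio_antimono) (use assms in auto)
  moreover have "Gamma (y + 1/2) / Gamma ((y + 1/2) + (p - 1/2))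
      \<le> Gamma (x + 1/2) / Gamma ((x + 1/2) + (p - 1/2))"
    by (rule Gamma_ratio_antimono) (use assms in auto)
  ultimately have "(Gamma y / Gamma (y + q)) * (Gamma (y + 1/2) / Gamma ((y + 1/2) + (p - 1/2)))
      \<le> (Gamma x / Gamma (x + q)) * (Gamma (x + 1/2) / Gamma ((x + 1/2) + (p - 1/2)))"
    by (rule mult_mono) (use assms y in auto)
  then show ?thesis
    unfolding c_factor_split[OF assms(1,3,4)] c_factor_split[OF y assms(3,4)]
    by (rule divide_right_mono) simp
qed

lemma c_prime_as_product:
  "c_prime S m P lam = (\<Prod>a\<in>Sigma0_pos S P.
     c_factor (real (m ((1/2::real) *\<^sub>R a)) / 4 + 1/2)
              (real (m ((1/2::real) *\<^sub>R a)) / 4 + real (m a) / 2) (coroot_coeff lam a))"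
  unfolding c_prime_def c_factor_def Let_def by (rule prod.cong) (simp_all add: add.assoc)

text \<open>Comparison principle: if \<open>0 < \<lambda>\<^sub>\<alpha> \<le> \<lambda>'\<^sub>\<alpha>\<close> for all \<open>\<alpha> \<in> \<Sigma>\<^sub>0\<^sup>+\<close> and
  \<open>\<rho>\<^sub>\<alpha> > 0\<close> (so that the normalising constant is positive), then \<open>c(\<lambda>') \<le> c(\<lambda>)\<close>.\<close>
lemma c_fun_antimono:
  assumes rho_pos: "\<And>a. a \<in> Sigma0_pos S P \<Longrightarrow> coroot_coeff (rho_vec m P) a > 0"
    and lam_pos: "\<And>a. a \<in> Sigma0_pos S P \<Longrightarrow> coroot_coeff lam a > 0"
    and lam_le: "\<And>a. a \<in> Sigma0_pos S P \<Longrightarrow> coroot_coeff lam a \<le> coroot_coeff lam' a"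
  shows "c_fun S m P lam' \<le> c_fun S m P lam"
proof -
  define p where "p a = real (m ((1/2::real) *\<^sub>R a)) / 4 + 1/2" for a
  define q where "q a = real (m ((1/2::real) *\<^sub>R a)) / 4 + real (m a) / 2" for a
  have pq: "p a \<ge> 1/2" "q a \<ge> 0" for a by (auto simp: p_def q_def)
  have c_prime_pq: "c_prime S m P \<nu> = (\<Prod>a\<in>Sigma0_pos S P. c_factor (p a) (q a) (coroot_coeff \<nu> a))"
    for \<nu> unfolding c_prime_as_product p_def q_def ..
  have "c_prime S m P lam' \<le> c_prime S m P lam"
    unfolding c_prime_pq
  proof (rule prod_mono)
    fix a assume a: "a \<in> Sigma0_pos S P"
    have "0 < coroot_coeff lam' a" using lam_pos[OF a] lam_le[OF a] by linarith
    then show "0 \<le> c_factor (p a) (q a) (coroot_coeff lam' a)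
        \<and> c_factor (p a) (q a) (coroot_coeff lam' a) \<le> c_factor (p a) (q a) (coroot_coeff lam a)"
      using c_factor_pos pq c_factor_antimono[OF lam_pos[OF a] lam_le[OF a]] by (simp add: less_imp_le)
  qed
  moreover have "c_prime S m P (rho_vec m P) > 0"
    unfolding c_prime_pq by (rule prod_pos) (use c_factor_pos pq rho_pos in auto)
  ultimately show ?thesis unfolding c_fun_def by (simp add: divide_right_mono)
qed

section \<open>Coroot coefficients and reflections\<close>

lemma coroot_coeff_add: "coroot_coeff (x + y) a = coroot_coeff x a + coroot_coeff y a"
  by (simp add: coroot_coeff_def inner_add_left add_divide_distrib)

lemma coroot_coeff_sum:
  "coroot_coeff (\<Sum>j\<in>A. c j *\<^sub>R v j) a = (\<Sum>j\<in>A. c j * coroot_coeff (v j) a)"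
  by (simp add: coroot_coeff_def inner_sum_left sum_divide_distrib)

lemma root_reflect_self: "a \<noteq> 0 \<Longrightarrow> root_reflect a a = - a"
  by (simp add: root_reflect_def coroot_coeff_def algebra_simps scaleR_2)

lemma root_reflect_half: "root_reflect a ((1/2::real) *\<^sub>R a) = - ((1/2::real) *\<^sub>R a)"
proof -
  have "(1/2::real) *\<^sub>R a + (1/2::real) *\<^sub>R a = a" by (simp add: scaleR_add_left[symmetric])
  then show ?thesis
    by (cases "a = 0") (simp_all add: root_reflect_def coroot_coeff_def algebra_simps)
qed

lemma inner_root_reflect: "a \<noteq> 0 \<Longrightarrow> inner (root_reflect a b) a = - inner b a"
  by (simp add: root_reflect_def coroot_coeff_def inner_diff_left algebra_simps)

lemma root_reflect_involutive: "a \<noteq> 0 \<Longrightarrow> root_reflect a (root_reflect a b) = b"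
proof -
  assume "a \<noteq> 0"
  then have "root_reflect a (root_reflect a b) = root_reflect a b + (2 * coroot_coeff b a) *\<^sub>R a"
    using inner_root_reflect[of a b] by (simp add: root_reflect_def coroot_coeff_def algebra_simps)
  then show ?thesis by (simp add: root_reflect_def)
qed

text \<open>If \<open>2c\<close> and \<open>2/c\<close> are integers and \<open>c > 0\<close>, then \<open>c \<in> {1/2, 1, 2}\<close>; this is the
  arithmetic behind the classification of proportional roots.\<close>
lemma half_integer_pair:
  fixes c :: real
  assumes "c > 0" "2 * c \<in> \<int>" "2 / c \<in> \<int>"
  shows "c = 1/2 \<or> c = 1 \<or> c = 2"
proof -
  obtain p where p: "2 * c = of_int p" using assms(2) by (auto elim: Ints_cases)
  obtain q where q: "2 / c = of_int q" using assms(3) by (auto elim: Ints_cases)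
  have "of_int (p * q) = (2 * c) * (2 / c)" using p q by simp
  also have "\<dots> = (4::real)" using assms(1) by simp
  finally have pq: "p * q = 4" by linarith
  have "p > 0" using p assms(1) by (metis of_int_0_less_iff zero_less_mult_iff zero_less_numeral)
  moreover have "q > 0" using q assms(1) by (metis of_int_0_less_iff divide_pos_pos zero_less_numeral)
  ultimately have "p \<le> 4" using pq
    by (metis int_one_le_iff_zero_less mult.right_neutral mult_left_mono order_less_imp_le)
  moreover have "p \<noteq> 3"
  proof
    assume "p = 3"
    with pq have "3 * q = 4" by simp
    then show False by presburger
  qed
  ultimately have "p = 1 \<or> p = 2 \<or> p = 4" using \<open>p > 0\<close> by presburger
  then show ?thesis using p by auto
qed

lemma sum_ge_scaled_term:
  fixes x :: "nat \<Rightarrow> real"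
  assumes "finite A" "s \<in> A" "\<And>j. j \<in> A \<Longrightarrow> x j \<ge> 0" "k s > 0"
  shows "x s \<le> (\<Sum>j\<in>A. real (k j) * x j)"
proof -
  have "1 \<le> real (k s)" using assms(4) by simp
  then have "x s \<le> real (k s) * x s"
    using mult_right_mono[of 1 "real (k s)" "x s"] assms(2,3) by simp
  also have "\<dots> \<le> (\<Sum>j\<in>A. real (k j) * x j)"
    by (rule member_le_sum) (use assms in auto)
  finally show ?thesis .
qed

section \<open>Positive systems and simple roots\<close>

locale positive_root_system =
  fixes S :: "'a::euclidean_space set" and m :: "'a \<Rightarrow> nat" and P :: "'a set" and h :: 'a
  assumes root_system: "root_system_mult S m"
    and regular: "\<And>a. a \<in> S \<Longrightarrow> inner a h \<noteq> 0"
    and positive_def: "P = {a\<in>S. inner a h > 0}"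
begin

abbreviation "S0 \<equiv> Sigma0_pos S P"
abbreviation "\<Delta> \<equiv> simple_roots0 S P"

lemma finite_roots: "finite S"
  and zero_not_root: "0 \<notin> S"
  and reflect_root: "a \<in> S \<Longrightarrow> b \<in> S \<Longrightarrow> root_reflect a b \<in> S"
  and integral: "a \<in> S \<Longrightarrow> b \<in> S \<Longrightarrow> 2 * coroot_coeff b a \<in> \<int>"
  and mult_pos: "a \<in> S \<Longrightarrow> m a > 0"
  and mult_reflect: "a \<in> S \<Longrightarrow> b \<in> S \<Longrightarrow> m (root_reflect a b) = m b"
  using root_system unfolding root_system_mult_def by blast+

lemma S0_subset: "S0 \<subseteq> P" and positive_subset: "P \<subseteq> S" and simple_subset: "\<Delta> \<subseteq> S0"
  by (auto simp: Sigma0_pos_def simple_roots0_def positive_def)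

lemma finite_positive: "finite P" and finite_S0: "finite S0" and finite_simple: "finite \<Delta>"
  using finite_subset[OF positive_subset finite_roots] finite_subset[OF S0_subset]
    finite_subset[OF simple_subset] by blast+

lemma positive_height: "a \<in> P \<Longrightarrow> inner a h > 0"
  by (simp add: positive_def)

lemma root_norm_pos: "a \<in> S \<Longrightarrow> inner a a > 0"
  using zero_not_root by auto

lemma neg_root: "a \<in> S \<Longrightarrow> - a \<in> S"
  using reflect_root[of a a] root_reflect_self[of a] zero_not_root by metis

lemma proportional_roots:
  assumes a: "a \<in> S" and ca: "c *\<^sub>R a \<in> S" and c: "c > 0"
  shows "c = 1/2 \<or> c = 1 \<or> c = 2"
proof (rule half_integer_pair[OF c])
  have aa: "inner a a > 0" using root_norm_pos[OF a] .
  have "2 * coroot_coeff (c *\<^sub>R a) a = 2 * c" using aa by (simp add: coroot_coeff_def)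
  then show "2 * c \<in> \<int>" using integral[OF a ca] by simp
  have "2 * coroot_coeff a (c *\<^sub>R a) = 2 / c"
    using aa c by (simp add: coroot_coeff_def field_simps power2_eq_square)
  then show "2 / c \<in> \<int>" using integral[OF ca a] by simp
qed

lemma no_quadruple_root: "a \<in> S \<Longrightarrow> (2::real) *\<^sub>R ((2::real) *\<^sub>R a) \<notin> S"
  using proportional_roots[of a 4] by force

text \<open>Every root of \<open>\<Sigma>\<^sub>0\<^sup>+\<close> is a non-negative integer combination of simple roots
  (induction on the height \<open>\<langle>a, h\<rangle>\<close>, measured by the number of lower roots).\<close>
lemma S0_nat_combination:
  assumes "a \<in> S0"
  shows "\<exists>n::'a \<Rightarrow> nat. a = (\<Sum>b\<in>\<Delta>. real (n b) *\<^sub>R b)"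
  using assms
proof (induction "card {b\<in>S0. inner b h < inner a h}" arbitrary: a rule: less_induct)
  case (less a)
  have lower: "card {x\<in>S0. inner x h < inner b h} < card {x\<in>S0. inner x h < inner a h}"
    if "b \<in> S0" "inner b h < inner a h" for b
  proof (rule psubset_card_mono)
    show "finite {x\<in>S0. inner x h < inner a h}" using finite_S0 by simp
    show "{x\<in>S0. inner x h < inner b h} \<subset> {x\<in>S0. inner x h < inner a h}"
      using that by auto
  qed
  show ?case
  proof (cases "a \<in> \<Delta>")
    case True
    have "(\<Sum>b\<in>\<Delta>. real (if b = a then 1 else 0) *\<^sub>R b) = (\<Sum>b\<in>\<Delta>. if b = a then b else 0)"
      by (rule sum.cong) auto
    also have "\<dots> = a" using True finite_simple by simp
    finally have "a = (\<Sum>b\<in>\<Delta>. real (if b = a then 1 else 0) *\<^sub>R b)" ..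
    then show ?thesis by (rule exI[of _ "\<lambda>b. if b = a then 1 else 0"])
  next
    case False
    then obtain b c where bc: "b \<in> S0" "c \<in> S0" "a = b + c"
      using less.prems unfolding simple_roots0_def by auto
    then have "inner b h > 0" "inner c h > 0" using S0_subset positive_height by auto
    then have "inner b h < inner a h" "inner c h < inner a h" using bc by (auto simp: inner_add_left)
    then obtain nb nc where "b = (\<Sum>x\<in>\<Delta>. real (nb x) *\<^sub>R x)" "c = (\<Sum>x\<in>\<Delta>. real (nc x) *\<^sub>R x)"
      using less.hyps[OF lower] bc by meson
    then have "a = (\<Sum>x\<in>\<Delta>. real (nb x + nc x) *\<^sub>R x)"
      using bc by (simp add: scaleR_add_left sum.distrib)
    then show ?thesis by (rule exI[of _ "\<lambda>x. nb x + nc x"])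
  qed
qed

text \<open>Every positive root is a non-negative combination of simple roots: either it lies
  in \<open>\<Sigma>\<^sub>0\<^sup>+\<close>, or its double does.\<close>
lemma positive_nonneg_combination:
  assumes a: "a \<in> P"
  shows "\<exists>c. (\<forall>b. c b \<ge> 0) \<and> a = (\<Sum>b\<in>\<Delta>. c b *\<^sub>R b)"
proof (cases "a \<in> S0")
  case True
  then obtain n where "a = (\<Sum>b\<in>\<Delta>. real (n b) *\<^sub>R b)" using S0_nat_combination by blast
  then show ?thesis by (intro exI[of _ "\<lambda>b. real (n b)"]) auto
next
  case False
  then have "(2::real) *\<^sub>R a \<in> S" using a by (auto simp: Sigma0_pos_def)
  then have "(2::real) *\<^sub>R a \<in> S0"
    using no_quadruple_root[of a] a positive_height[OF a] positive_subset
    by (auto simp: Sigma0_pos_def positive_def)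
  then obtain n where n: "(2::real) *\<^sub>R a = (\<Sum>b\<in>\<Delta>. real (n b) *\<^sub>R b)"
    using S0_nat_combination by blast
  have "a = (1/2::real) *\<^sub>R ((2::real) *\<^sub>R a)" by simp
  also have "\<dots> = (\<Sum>b\<in>\<Delta>. (real (n b) / 2) *\<^sub>R b)"
    unfolding n scaleR_sum_right by simp
  finally show ?thesis by (intro exI[of _ "\<lambda>b. real (n b) / 2"]) auto
qed

end

section \<open>Simple roots with a dual basis of fundamental weights\<close>

text \<open>Simple roots \<open>\<alpha>\<^sub>1, \<dots>, \<alpha>\<^sub>r\<close> together with weights \<open>\<xi>\<^sub>1, \<dots>, \<xi>\<^sub>r\<close> dual to them,
  \<open>(\<xi>\<^sub>i)\<^sub>\<alpha>\<^sub>j = \<delta>\<^sub>i\<^sub>j\<close>, as for the class 1 fundamental weights.\<close>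
locale simple_dual_basis = positive_root_system S m P h for S m P h +
  fixes alpha xi :: "nat \<Rightarrow> 'a" and r :: nat
  assumes alpha_bij: "bij_betw alpha {1..r} (simple_roots0 S P)"
    and dual: "\<And>i j. i \<in> {1..r} \<Longrightarrow> j \<in> {1..r} \<Longrightarrow>
                  coroot_coeff (xi i) (alpha j) = (if i = j then 1 else 0)"
begin

abbreviation "I \<equiv> {1..r}"

lemma sum_simple_reindex: "(\<Sum>b\<in>\<Delta>. f b) = (\<Sum>j\<in>I. f (alpha j))"
  using sum.reindex_bij_betw[OF alpha_bij, of f] by simp

lemma alpha_simple: "j \<in> I \<Longrightarrow> alpha j \<in> \<Delta>"
  using bij_betw_apply[OF alpha_bij] .

lemma alpha_S0: "j \<in> I \<Longrightarrow> alpha j \<in> S0"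
  and alpha_positive: "j \<in> I \<Longrightarrow> alpha j \<in> P"
  and alpha_root: "j \<in> I \<Longrightarrow> alpha j \<in> S"
  using alpha_simple simple_subset S0_subset positive_subset by blast+

lemma alpha_norm_pos: "j \<in> I \<Longrightarrow> inner (alpha j) (alpha j) > 0"
  using root_norm_pos alpha_root by blast

lemma xi_alpha:
  assumes "i \<in> I" "j \<in> I"
  shows "inner (xi i) (alpha j) = (if i = j then inner (alpha j) (alpha j) else 0)"
  using dual[OF assms] alpha_norm_pos[OF assms(2)]
  by (cases "i = j") (simp_all add: coroot_coeff_def)

lemma xi_coordinate:
  assumes i: "i \<in> I"
  shows "inner (xi i) (\<Sum>j\<in>I. c j *\<^sub>R alpha j) = c i * inner (alpha i) (alpha i)"
proof -
  have "inner (xi i) (\<Sum>j\<in>I. c j *\<^sub>R alpha j) = (\<Sum>j\<in>I. c j * inner (xi i) (alpha j))"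
    by (simp add: inner_sum_right)
  also have "\<dots> = (\<Sum>j\<in>I. if j = i then c i * inner (alpha i) (alpha i) else 0)"
    by (rule sum.cong) (use i xi_alpha in auto)
  also have "\<dots> = c i * inner (alpha i) (alpha i)" using i by simp
  finally show ?thesis .
qed

lemma xi_coeff_nonneg:
  assumes i: "i \<in> I" and a: "a \<in> S0"
  shows "coroot_coeff (xi i) a \<ge> 0"
proof -
  obtain n where "a = (\<Sum>j\<in>I. real (n (alpha j)) *\<^sub>R alpha j)"
    using S0_nat_combination[OF a] unfolding sum_simple_reindex by blast
  then have "inner (xi i) a = real (n (alpha i)) * inner (alpha i) (alpha i)"
    using xi_coordinate[OF i] by simp
  then show ?thesis using alpha_norm_pos[OF i] by (simp add: coroot_coeff_def)
qed

lemma weight_coeff_ge: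
  assumes a: "a \<in> S0" and s: "1 \<le> s" "s \<le> r" and ks: "k s > 0"
  shows "coroot_coeff (xi s) a \<le> coroot_coeff (\<Sum>j=1..s. real (k j) *\<^sub>R xi j) a"
  unfolding coroot_coeff_sum
proof (rule sum_ge_scaled_term)
  show "s \<in> {1..s}" using s by simp
  show "coroot_coeff (xi j) a \<ge> 0" if "j \<in> {1..s}" for j
    using xi_coeff_nonneg[OF _ a] that s by simp
qed (use ks in simp_all)

lemma positive_nonneg_combination_alpha:
  assumes "a \<in> P"
  shows "\<exists>c. (\<forall>j. c j \<ge> 0) \<and> a = (\<Sum>j\<in>I. c j *\<^sub>R alpha j)"
proof -
  obtain c where "\<forall>b. c b \<ge> 0" "a = (\<Sum>b\<in>\<Delta>. c b *\<^sub>R b)"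
    using positive_nonneg_combination[OF assms] by blast
  then show ?thesis unfolding sum_simple_reindex by (intro exI[of _ "\<lambda>j. c (alpha j)"]) simp
qed

text \<open>Since the simple roots are linearly independent (witnessed by the dual weights), two
  positive roots can only sum to a multiple of \<open>\<alpha>\<^sub>i\<close> if both are multiples of \<open>\<alpha>\<^sub>i\<close>.\<close>
lemma positive_sum_on_simple_line:
  assumes i: "i \<in> I" and b: "\<beta> \<in> P" and g: "\<gamma> \<in> P" and sum_eq: "\<beta> + \<gamma> = t *\<^sub>R alpha i"
  shows "\<exists>c>0. \<beta> = c *\<^sub>R alpha i"
proof -
  obtain c where c: "\<forall>j. c j \<ge> 0" "\<beta> = (\<Sum>j\<in>I. c j *\<^sub>R alpha j)"
    using positive_nonneg_combination_alpha[OF b] by blast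
  obtain d where d: "\<forall>j. d j \<ge> 0" "\<gamma> = (\<Sum>j\<in>I. d j *\<^sub>R alpha j)"
    using positive_nonneg_combination_alpha[OF g] by blast
  have cd_sum: "(\<Sum>j\<in>I. (c j + d j) *\<^sub>R alpha j) = t *\<^sub>R alpha i"
    using c d sum_eq by (simp add: scaleR_add_left sum.distrib)
  have other_zero: "c j = 0" if j: "j \<in> I" "j \<noteq> i" for j
  proof -
    have "(c j + d j) * inner (alpha j) (alpha j) = inner (xi j) (t *\<^sub>R alpha i)"
      using xi_coordinate[OF j(1), of "\<lambda>j. c j + d j"] cd_sum by simp
    also have "\<dots> = 0" using xi_alpha[OF j(1) i] j(2) by simp
    finally have "c j + d j = 0" using alpha_norm_pos[OF j(1)] by simp
    then show ?thesis using c(1) d(1) by (metis add_nonneg_eq_0_iff)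
  qed
  have "\<beta> = (\<Sum>j\<in>I. if j = i then c i *\<^sub>R alpha i else 0)"
    unfolding c(2) by (rule sum.cong) (use other_zero in auto)
  also have "\<dots> = c i *\<^sub>R alpha i" using i by simp
  finally have multiple: "\<beta> = c i *\<^sub>R alpha i" .
  then have "c i \<noteq> 0" using positive_height[OF b] by auto
  then have "c i > 0" using c(1) by (metis less_eq_real_def)
  with multiple show ?thesis by blast
qed

text \<open>The simple reflection \<open>s\<^sub>\<alpha>\<^sub>i\<close> maps every positive root other than \<open>\<alpha>\<^sub>i\<close> and
  \<open>\<alpha>\<^sub>i/2\<close> to a positive root: otherwise \<open>\<beta>\<close> and \<open>-s\<^sub>\<alpha>\<^sub>i \<beta>\<close> would be positive roots
  summing to a multiple of \<open>\<alpha>\<^sub>i\<close>.\<close>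
lemma simple_reflection_positive:
  assumes i: "i \<in> I" and b: "\<beta> \<in> P" and n1: "\<beta> \<noteq> alpha i"
    and n2: "\<beta> \<noteq> (1/2::real) *\<^sub>R alpha i"
  shows "root_reflect (alpha i) \<beta> \<in> P"
proof (rule ccontr)
  assume not_pos: "root_reflect (alpha i) \<beta> \<notin> P"
  have bS: "\<beta> \<in> S" and aS: "alpha i \<in> S" using b positive_subset alpha_root[OF i] by auto
  have rS: "root_reflect (alpha i) \<beta> \<in> S" using reflect_root[OF aS bS] .
  have "\<not> inner (root_reflect (alpha i) \<beta>) h > 0" using not_pos rS by (simp add: positive_def)
  then have "inner (root_reflect (alpha i) \<beta>) h < 0" using regular[OF rS] by linarith
  then have neg_pos: "- root_reflect (alpha i) \<beta> \<in> P"
    using neg_root[OF rS] by (simp add: positive_def)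
  have "\<beta> + - root_reflect (alpha i) \<beta> = (2 * coroot_coeff \<beta> (alpha i)) *\<^sub>R alpha i"
    by (simp add: root_reflect_def)
  then obtain c where "c > 0" and multiple: "\<beta> = c *\<^sub>R alpha i"
    using positive_sum_on_simple_line[OF i b neg_pos] by blast
  then have "c = 1/2 \<or> c = 1 \<or> c = 2"
    using proportional_roots[OF aS] bS by simp
  moreover have "(2::real) *\<^sub>R alpha i \<notin> S" using alpha_S0[OF i] by (simp add: Sigma0_pos_def)
  ultimately show False using multiple n1 n2 bS by auto
qed

lemma simple_reflection_permutes:
  assumes i: "i \<in> I"
  defines "Q \<equiv> P - {alpha i, (1/2::real) *\<^sub>R alpha i}"
  shows "bij_betw (root_reflect (alpha i)) Q Q"
proof -
  let ?\<sigma> = "root_reflect (alpha i)"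
  have nonzero: "alpha i \<noteq> 0" using alpha_root[OF i] zero_not_root by auto
  have inv: "?\<sigma> (?\<sigma> x) = x" for x using root_reflect_involutive[OF nonzero] .
  have not_positive: "- alpha i \<notin> P" "- ((1/2::real) *\<^sub>R alpha i) \<notin> P"
    using positive_height[OF alpha_positive[OF i]] by (auto simp: positive_def)
  have maps: "?\<sigma> x \<in> Q" if x: "x \<in> Q" for x
  proof -
    have xP: "x \<in> P" "x \<noteq> alpha i" "x \<noteq> (1/2::real) *\<^sub>R alpha i" using x by (auto simp: Q_def)
    have "?\<sigma> x \<noteq> alpha i"
      using inv[of x] root_reflect_self[OF nonzero] not_positive(1) xP(1) by metis
    moreover have "?\<sigma> x \<noteq> (1/2::real) *\<^sub>R alpha i"
      using inv[of x] root_reflect_half[of "alpha i"] not_positive(2) xP(1) by metis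
    ultimately show ?thesis using simple_reflection_positive[OF i xP] by (simp add: Q_def)
  qed
  show ?thesis by (rule bij_betw_byWitness[where f' = ?\<sigma>]) (use inv maps in auto)
qed

text \<open>\<open>\<langle>\<rho>, \<alpha>\<^sub>i\<rangle> > 0\<close>: the contributions of the roots permuted by \<open>s\<^sub>\<alpha>\<^sub>i\<close> cancel,
  since the reflection negates their pairing with \<open>\<alpha>\<^sub>i\<close> and preserves multiplicities;
  what remains is the positive contribution of \<open>\<alpha>\<^sub>i\<close> and possibly \<open>\<alpha>\<^sub>i/2\<close>.\<close>
lemma rho_simple_pos:
  assumes i: "i \<in> I"
  shows "inner (rho_vec m P) (alpha i) > 0"
proof -
  define a where "a = alpha i"
  define g where "g b = real (m b) * inner b a" for b
  define Q where "Q = P - {a, (1/2::real) *\<^sub>R a}"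
  have aS: "a \<in> S" and aP: "a \<in> P" and nonzero: "a \<noteq> 0" and aa: "inner a a > 0"
    using alpha_root[OF i] alpha_positive[OF i] alpha_norm_pos[OF i] by (auto simp: a_def)
  have bij: "bij_betw (root_reflect a) Q Q"
    using simple_reflection_permutes[OF i] by (simp add: Q_def a_def)
  have antisym: "g (root_reflect a x) = - g x" if "x \<in> Q" for x
    using that positive_subset mult_reflect[OF aS] inner_root_reflect[OF nonzero, of x]
    by (auto simp: g_def Q_def inner_commute)
  have "sum g Q = (\<Sum>x\<in>Q. g (root_reflect a x))"
    using sum.reindex_bij_betw[OF bij, of g] by simp
  also have "\<dots> = - sum g Q" using antisym by (simp add: sum_negf)
  finally have Q_zero: "sum g Q = 0" by simp
  have "g a \<le> sum g (P \<inter> {a, (1/2::real) *\<^sub>R a})"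
    by (rule member_le_sum) (use aP aa in \<open>auto simp: g_def\<close>)
  moreover have "g a > 0" using mult_pos[OF aS] aa by (simp add: g_def)
  moreover have "sum g P = sum g (P \<inter> {a, (1/2::real) *\<^sub>R a}) + sum g Q"
    unfolding Q_def by (rule sum.Int_Diff[OF finite_positive])
  ultimately have "sum g P > 0" using Q_zero by linarith
  moreover have "inner (rho_vec m P) a = (1/2) * sum g P"
    by (simp add: rho_vec_def g_def inner_sum_left)
  ultimately show ?thesis by (simp add: a_def)
qed

text \<open>\<open>\<rho>\<^sub>a > 0\<close> on \<open>\<Sigma>\<^sub>0\<^sup>+\<close>, as \<open>a\<close> is a non-zero non-negative combination of simple roots.\<close>
lemma rho_coeff_pos:
  assumes a: "a \<in> S0"
  shows "coroot_coeff (rho_vec m P) a > 0"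
proof -
  obtain n where n: "a = (\<Sum>j\<in>I. real (n (alpha j)) *\<^sub>R alpha j)"
    using S0_nat_combination[OF a] unfolding sum_simple_reindex by blast
  have "a \<noteq> 0" using a S0_subset positive_subset zero_not_root by auto
  then obtain j where j: "j \<in> I" "n (alpha j) \<noteq> 0"
    using n by (metis (no_types, lifting) of_nat_0 scaleR_zero_left sum.neutral)
  have "0 < real (n (alpha j)) * inner (rho_vec m P) (alpha j)"
    using j rho_simple_pos by simp
  also have "\<dots> \<le> (\<Sum>j\<in>I. real (n (alpha j)) * inner (rho_vec m P) (alpha j))"
  proof (rule member_le_sum)
    fix x assume "x \<in> I - {j}"
    then have "inner (rho_vec m P) (alpha x) > 0" using rho_simple_pos by simp
    then show "0 \<le> real (n (alpha x)) * inner (rho_vec m P) (alpha x)" by simp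
  qed (use j in auto)
  also have "\<dots> = inner (rho_vec m P) a" unfolding n by (simp add: inner_sum_right)
  finally have "inner (rho_vec m P) a > 0" .
  then show ?thesis using a S0_subset positive_subset root_norm_pos by (auto simp: coroot_coeff_def)
qed

end

theorem lemma6p1:
  fixes S :: "'a::euclidean_space set" and m :: "'a \<Rightarrow> nat" and P :: "'a set"
    and alpha xi :: "nat \<Rightarrow> 'a" and k :: "nat \<Rightarrow> nat" and s :: nat
  assumes "root_system_mult S m"
    and "positive_system S P"
    and "bij_betw alpha {1..DIM('a)} (simple_roots0 S P)"
    and "\<forall>i\<in>{1..DIM('a)}. \<forall>j\<in>{1..DIM('a)}.
           coroot_coeff (xi i) (alpha j) = (if i = j then 1 else 0)"
    and "1 \<le> s" and "s \<le> DIM('a)" and "k s > 0"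
  shows "c_fun S m P ((\<Sum>j=1..s. real (k j) *\<^sub>R xi j) + rho_vec m P)
         \<le> c_fun S m P (xi s + rho_vec m P)"
proof -
  obtain h where h: "\<forall>a\<in>S. inner a h \<noteq> 0" "P = {a\<in>S. inner a h > 0}"
    using assms(2) unfolding positive_system_def by blast
  interpret simple_dual_basis S m P h alpha xi "DIM('a)"
    using assms(1,3,4) h by unfold_locales auto
  show ?thesis
  proof (rule c_fun_antimono)
    fix a assume a: "a \<in> S0"
    show rho: "coroot_coeff (rho_vec m P) a > 0" using rho_coeff_pos[OF a] .
    show "coroot_coeff (xi s + rho_vec m P) a > 0"
      using rho xi_coeff_nonneg[OF _ a, of s] assms(5,6) by (simp add: coroot_coeff_add)
    show "coroot_coeff (xi s + rho_vec m P) a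
        \<le> coroot_coeff ((\<Sum>j=1..s. real (k j) *\<^sub>R xi j) + rho_vec m P) a"
      using weight_coeff_ge[where k = k, OF a assms(5-7)] by (simp add: coroot_coeff_add)
  qed
qed

end
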